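(* Consider a binary node classification problem on a graph in which every node has exactly $d$ neighbours (self-loops having been added), node labels lie in $\{0,1\}$, and, given that a center node has label $c\in\{0,1\}$, each of its neighbours has the same label $c$ with probability $P_c\in[0,1]$. Let $X_0, X_1$ be independent random feature vectors in $\mathbb{R}^{\iota}$ distributed as the node features of class $0$ and class $1$, with means $\mu_{X_0},\mu_{X_1}$. Consider a one-layer GCN without non-linear activation, with kernel $W\neq 0$, so that the output representation of a node of class $0$ is $O_0=W\big(P_0X_0+(1-P_0)X_1\big)$ and that of a node of class $1$ is $O_1=W\big(P_1X_1+(1-P_1)X_0\big)$. Put $\sigma_c^2=\mathbb{E}\|W(X_c-\mu_{X_c})\|^2$ for $c=0,1$, and assume $\sigma_0>0$ and $\sigma_1>0$. Define $S_c=\big(\mathbb{E}\|O_c-\mathbb{E}O_c\|^2\big)^{1/2}$ for $c=0,1$, $M_{0,1}=\|\mathbb{E}O_0-\mathbb{E}O_1\|$, and the complexity measure $\mathcal{C}=(S_0+S_1)/M_{0,1}$ (with $\mathcal{C}=+\infty$ if $M_{0,1}=0$). Then $\mathcal{C}\to+\infty$ as $|P_0+P_1-1|\to 0$.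
   Context: The complexity measure is the "Consistency of Representations" measure based on the Davies–Bouldin index with $p=2$ and $k=2$ classes: for classes $i,j$, $S_i$ is the root-mean-square distance of class-$i$ output representations to their centroid $\mu_{\mathcal{O}_i}$, $M_{i,j}=\|\mu_{\mathcal{O}_i}-\mu_{\mathcal{O}_j}\|_2$, and $\mathcal{C}=\frac{1}{k}\sum_i\max_{j\neq i}\frac{S_i+S_j}{M_{i,j}}$, which for $k=2$ equals $(S_0+S_1)/M_{0,1}$. A larger $\mathcal{C}$ is interpreted as worse generalization. The GCN layer (with mean aggregation over the $d$ neighbours including the self-loop) has output $W\sum_{j\in\mathcal{N}(v_i)}\frac{1}{d}x_j$; the paper models its output for a class-$c$ node as stated in the claim. *)

theory Defs
  imports "HOL-Probability.Probability"
begin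

definition gcn_out :: "real^'i^'o \<Rightarrow> real \<Rightarrow> ('a \<Rightarrow> real^'i) \<Rightarrow> ('a \<Rightarrow> real^'i) \<Rightarrow> 'a \<Rightarrow> real^'o" where
  "gcn_out W p Xs Xo \<omega> = W *v (p *\<^sub>R Xs \<omega> + (1 - p) *\<^sub>R Xo \<omega>)"

definition spread :: "'a measure \<Rightarrow> ('a \<Rightarrow> real^'o) \<Rightarrow> real" where
  "spread M Y = sqrt (integral\<^sup>L M (\<lambda>\<omega>. (norm (Y \<omega> - integral\<^sup>L M Y))\<^sup>2))"

definition consistency :: "'a measure \<Rightarrow> ('a \<Rightarrow> real^'o) \<Rightarrow> ('a \<Rightarrow> real^'o) \<Rightarrow> ereal" where
  "consistency M Y0 Y1 =
     (let m = norm (integral\<^sup>L M Y0 - integral\<^sup>L M Y1)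
      in if m = 0 then PInfty else ereal ((spread M Y0 + spread M Y1) / m))"

end

theory Submission
  imports Defs
begin

(* Write O_c - E O_c = p U + (1 - p) V, where U = W (X_c - mu_c) and V = W (X_c' - mu_c') are
   independent and centred. The cross term E <U, V> vanishes, so
   S_c^2 = p^2 sigma_c^2 + (1 - p)^2 sigma_c'^2 >= min (sigma_0^2, sigma_1^2) / 2
   stays bounded away from 0 uniformly in p, whereas the means differ by
   (P_0 + P_1 - 1) W (mu_0 - mu_1), so M_01 -> 0 and the ratio blows up. *)

lemma norm_scaleR_add_scaleR_squared:
  fixes u v :: "'a::real_inner"
  shows "(norm (p *\<^sub>R u + q *\<^sub>R v))\<^sup>2 = p\<^sup>2 * (norm u)\<^sup>2 + q\<^sup>2 * (norm v)\<^sup>2 + 2 * p * q * (u \<bullet> v)"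
  unfolding power2_norm_eq_inner
  by (simp add: inner_add_left inner_add_right inner_commute[of v u] power2_eq_square algebra_simps)

lemma half_min_le_convex_squares:
  fixes a b p :: real
  assumes "0 \<le> a" "0 \<le> b"
  shows "min a b / 2 \<le> p\<^sup>2 * a + (1 - p)\<^sup>2 * b"
proof -
  have "1 / 2 \<le> p\<^sup>2 + (1 - p)\<^sup>2"
    using zero_le_power2[of "2 * p - 1"] by (simp add: power2_eq_square algebra_simps)
  then have "min a b * (1 / 2) \<le> min a b * (p\<^sup>2 + (1 - p)\<^sup>2)"
    using assms by (intro mult_left_mono) auto
  also have "\<dots> \<le> p\<^sup>2 * a + (1 - p)\<^sup>2 * b"
    by (simp add: distrib_left mult.commute add_mono mult_right_mono)
  finally show ?thesis
    by simp
qed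

lemma integrable_of_integral_neq_zero: "integral\<^sup>L M f \<noteq> 0 \<Longrightarrow> integrable M f"
  using not_integrable_integral_eq by blast

lemma (in prob_space) indep_var_integral_inner:
  fixes X Y :: "'a \<Rightarrow> real^'n"
  assumes indep: "indep_var borel X borel Y" and "integrable M X" "integrable M Y"
  shows "integrable M (\<lambda>\<omega>. X \<omega> \<bullet> Y \<omega>)"
    and "(\<integral>\<omega>. X \<omega> \<bullet> Y \<omega> \<partial>M) = integral\<^sup>L M X \<bullet> integral\<^sup>L M Y"
proof -
  have indep_i: "indep_var borel (\<lambda>\<omega>. X \<omega> $ i) borel (\<lambda>\<omega>. Y \<omega> $ i)" for i
    using indep_var_compose[unfolded comp_def, OF indep, of "\<lambda>x. x $ i" borel "\<lambda>x. x $ i" borel]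
    by simp
  have int_i: "integrable M (\<lambda>\<omega>. Z \<omega> $ i)" "(\<integral>\<omega>. Z \<omega> $ i \<partial>M) = integral\<^sup>L M Z $ i"
    if "integrable M Z" for Z :: "'a \<Rightarrow> real^'n" and i
    using integrable_bounded_linear integral_bounded_linear bounded_linear_vec_nth that by blast+
  have inner_sum: "X \<omega> \<bullet> Y \<omega> = (\<Sum>i\<in>UNIV. X \<omega> $ i * Y \<omega> $ i)" for \<omega>
    by (simp add: inner_vec_def)
  show "integrable M (\<lambda>\<omega>. X \<omega> \<bullet> Y \<omega>)"
    unfolding inner_sum using indep_var_integrable[OF indep_i int_i(1) int_i(1)] assms by auto
  show "(\<integral>\<omega>. X \<omega> \<bullet> Y \<omega> \<partial>M) = integral\<^sup>L M X \<bullet> integral\<^sup>L M Y"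
    unfolding inner_sum
    using indep_var_integrable[OF indep_i int_i(1) int_i(1)] assms
    by (simp add: integral_sum indep_var_lebesgue_integral[OF indep_i int_i(1) int_i(1)] int_i(2) inner_vec_def)
qed

lemma integral_gcn_out:
  assumes "integrable M Xs" "integrable M Xo"
  shows "integral\<^sup>L M (gcn_out W p Xs Xo) = W *v (p *\<^sub>R integral\<^sup>L M Xs + (1 - p) *\<^sub>R integral\<^sup>L M Xo)"
proof -
  have "integral\<^sup>L M (gcn_out W p Xs Xo) = W *v (\<integral>\<omega>. p *\<^sub>R Xs \<omega> + (1 - p) *\<^sub>R Xo \<omega> \<partial>M)"
    unfolding gcn_out_def
    by (rule integral_bounded_linear[OF matrix_vector_mul_bounded_linear]) (use assms in auto)
  with assms show ?thesis by simp
qed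

lemma norm_integral_gcn_out_diff:
  fixes X0 X1 :: "'a \<Rightarrow> real^'i" and W :: "real^'i^'o"
  assumes "integrable M X0" "integrable M X1"
  shows "norm (integral\<^sup>L M (gcn_out W P0 X0 X1) - integral\<^sup>L M (gcn_out W P1 X1 X0))
    = \<bar>P0 + P1 - 1\<bar> * norm (W *v (integral\<^sup>L M X0 - integral\<^sup>L M X1))"
proof -
  have mean_diff: "W *v (P0 *\<^sub>R a + (1 - P0) *\<^sub>R b) - W *v (P1 *\<^sub>R b + (1 - P1) *\<^sub>R a)
      = (P0 + P1 - 1) *\<^sub>R (W *v (a - b))" for a b :: "real^'i"
    by (simp add: matrix_vector_right_distrib matrix_vector_mult_diff_distrib
        matrix_vector_mult_scaleR algebra_simps)
  show ?thesis
    unfolding integral_gcn_out[OF assms] integral_gcn_out[OF assms(2,1)] mean_diff by simp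
qed

lemma (in prob_space) spread_gcn_out:
  fixes Xs Xo :: "'a \<Rightarrow> real^'i" and W :: "real^'i^'o"
  defines "U \<equiv> \<lambda>\<omega>. W *v (Xs \<omega> - integral\<^sup>L M Xs)"
    and "V \<equiv> \<lambda>\<omega>. W *v (Xo \<omega> - integral\<^sup>L M Xo)"
  assumes indep: "indep_var borel Xs borel Xo"
    and "integrable M Xs" "integrable M Xo"
    and "integrable M (\<lambda>\<omega>. (norm (U \<omega>))\<^sup>2)" "integrable M (\<lambda>\<omega>. (norm (V \<omega>))\<^sup>2)"
  shows "spread M (gcn_out W p Xs Xo)
    = sqrt (p\<^sup>2 * (\<integral>\<omega>. (norm (U \<omega>))\<^sup>2 \<partial>M) + (1 - p)\<^sup>2 * (\<integral>\<omega>. (norm (V \<omega>))\<^sup>2 \<partial>M))"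
proof -
  have centered: "gcn_out W p Xs Xo \<omega> - integral\<^sup>L M (gcn_out W p Xs Xo) = p *\<^sub>R U \<omega> + (1 - p) *\<^sub>R V \<omega>"
    for \<omega>
    unfolding integral_gcn_out[OF assms(4,5)] gcn_out_def U_def V_def
    by (simp add: matrix_vector_right_distrib matrix_vector_mult_diff_distrib
        matrix_vector_mult_scaleR algebra_simps)
  have measurable: "(\<lambda>x. W *v (x - c)) \<in> borel_measurable borel" for c :: "real^'i"
    using measurable_compose[OF _ borel_measurable_continuous_onI[OF
          linear_continuous_on[OF matrix_vector_mul_bounded_linear]], of "\<lambda>x. x - c" borel W]
    by simp
  have indep_UV: "indep_var borel U borel V"
    unfolding U_def V_def by (rule indep_var_compose[unfolded comp_def, OF indep measurable measurable])
  have centered_integrable: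
      "integrable M (\<lambda>\<omega>. Xs \<omega> - integral\<^sup>L M Xs)" "integrable M (\<lambda>\<omega>. Xo \<omega> - integral\<^sup>L M Xo)"
    using assms(4,5) by simp_all
  have integrable_UV: "integrable M U" "integrable M V"
    unfolding U_def V_def
    by (rule integrable_bounded_linear[OF matrix_vector_mul_bounded_linear centered_integrable(1)],
        rule integrable_bounded_linear[OF matrix_vector_mul_bounded_linear centered_integrable(2)])
  have "integral\<^sup>L M U = 0"
    unfolding U_def integral_bounded_linear[OF matrix_vector_mul_bounded_linear centered_integrable(1)]
    using assms(4) by (simp add: prob_space)
  then have "(\<integral>\<omega>. U \<omega> \<bullet> V \<omega> \<partial>M) = 0"
    using indep_var_integral_inner(2)[OF indep_UV integrable_UV] by simp
  then show ?thesis
    unfolding spread_def centered norm_scaleR_add_scaleR_squared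
    using assms(6,7) indep_var_integral_inner(1)[OF indep_UV integrable_UV] by simp
qed

lemma (in prob_space) spread_gcn_out_ge:
  fixes Xs Xo :: "'a \<Rightarrow> real^'i" and W :: "real^'i^'o"
  defines "s \<equiv> \<integral>\<omega>. (norm (W *v (Xs \<omega> - integral\<^sup>L M Xs)))\<^sup>2 \<partial>M"
    and "t \<equiv> \<integral>\<omega>. (norm (W *v (Xo \<omega> - integral\<^sup>L M Xo)))\<^sup>2 \<partial>M"
  assumes "indep_var borel Xs borel Xo" "integrable M Xs" "integrable M Xo"
    and "integrable M (\<lambda>\<omega>. (norm (W *v (Xs \<omega> - integral\<^sup>L M Xs)))\<^sup>2)"
    and "integrable M (\<lambda>\<omega>. (norm (W *v (Xo \<omega> - integral\<^sup>L M Xo)))\<^sup>2)"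
  shows "sqrt (min s t / 2) \<le> spread M (gcn_out W p Xs Xo)"
proof -
  have "0 \<le> s" "0 \<le> t"
    unfolding s_def t_def by simp_all
  then have "min s t / 2 \<le> p\<^sup>2 * s + (1 - p)\<^sup>2 * t"
    by (rule half_min_le_convex_squares)
  then show ?thesis
    unfolding spread_gcn_out[OF assms(3-7)] s_def t_def by simp
qed

lemma spread_nonneg: "0 \<le> spread M Y"
  unfolding spread_def by simp

lemma ereal_less_consistency:
  fixes B c :: real
  assumes "c \<le> spread M Y0 + spread M Y1"
    and "norm (integral\<^sup>L M Y0 - integral\<^sup>L M Y1) * (\<bar>B\<bar> + 1) < c"
  shows "ereal B < consistency M Y0 Y1"
proof -
  let ?m = "norm (integral\<^sup>L M Y0 - integral\<^sup>L M Y1)"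
  have "B * ?m < c" if "?m > 0"
  proof -
    have "B * ?m \<le> \<bar>B\<bar> * ?m"
      using that by (intro mult_right_mono) auto
    also have "\<dots> < ?m * (\<bar>B\<bar> + 1)"
      using that by (simp add: algebra_simps)
    finally show ?thesis
      using assms(2) by linarith
  qed
  then show ?thesis
    using assms(1) by (auto simp: consistency_def Let_def field_simps)
qed

theorem theorem1:
  fixes M :: "'a measure" and X0 X1 :: "'a \<Rightarrow> real^'i" and W :: "real^'i^'o"
  assumes "prob_space M"
    and "X0 \<in> borel_measurable M" and "X1 \<in> borel_measurable M"
    and "prob_space.indep_var M borel X0 borel X1"
    and "integrable M X0" and "integrable M X1"
    and "integrable M (\<lambda>\<omega>. (norm (X0 \<omega>))\<^sup>2)"
    and "integrable M (\<lambda>\<omega>. (norm (X1 \<omega>))\<^sup>2)"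
    and "W \<noteq> 0"
    and "integral\<^sup>L M (\<lambda>\<omega>. (norm (W *v (X0 \<omega> - integral\<^sup>L M X0)))\<^sup>2) > 0"
    and "integral\<^sup>L M (\<lambda>\<omega>. (norm (W *v (X1 \<omega> - integral\<^sup>L M X1)))\<^sup>2) > 0"
  shows "\<forall>B::real. \<exists>\<delta>>0. \<forall>P0 P1. P0 \<in> {0..1} \<longrightarrow> P1 \<in> {0..1} \<longrightarrow>
           \<bar>P0 + P1 - 1\<bar> < \<delta> \<longrightarrow>
           ereal B < consistency M (gcn_out W P0 X0 X1) (gcn_out W P1 X1 X0)"
proof -
  interpret prob_space M by fact
  define c where "c = sqrt (min (\<integral>\<omega>. (norm (W *v (X0 \<omega> - integral\<^sup>L M X0)))\<^sup>2 \<partial>M)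
    (\<integral>\<omega>. (norm (W *v (X1 \<omega> - integral\<^sup>L M X1)))\<^sup>2 \<partial>M) / 2)"
  define K where "K = norm (W *v (integral\<^sup>L M X0 - integral\<^sup>L M X1))"
  have "0 < c" "0 \<le> K"
    using assms(10,11) by (simp_all add: c_def K_def)
  have spread_ge: "c \<le> spread M (gcn_out W P0 X0 X1) + spread M (gcn_out W P1 X1 X0)" for P0 P1
    unfolding c_def
    by (intro add_increasing2[OF spread_nonneg] spread_gcn_out_ge[OF assms(4-6)]
        integrable_of_integral_neq_zero) (use assms(10,11) in auto)
  have mean_dist: "norm (integral\<^sup>L M (gcn_out W P0 X0 X1) - integral\<^sup>L M (gcn_out W P1 X1 X0))
      * (\<bar>B\<bar> + 1) < c" if "\<bar>P0 + P1 - 1\<bar> < c / ((K + 1) * (\<bar>B\<bar> + 1))" for P0 P1 B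
  proof -
    have "\<bar>P0 + P1 - 1\<bar> * K * (\<bar>B\<bar> + 1) \<le> \<bar>P0 + P1 - 1\<bar> * (K + 1) * (\<bar>B\<bar> + 1)"
      by (intro mult_right_mono mult_left_mono) auto
    also have "\<dots> < c"
      using that \<open>0 \<le> K\<close> by (simp add: pos_less_divide_eq mult.assoc)
    finally show ?thesis
      by (simp add: norm_integral_gcn_out_diff assms(5,6) K_def)
  qed
  have "0 < c / ((K + 1) * (\<bar>B\<bar> + 1))" for B
    using \<open>0 < c\<close> \<open>0 \<le> K\<close> by (intro divide_pos_pos mult_pos_pos) auto
  then show ?thesis
    using ereal_less_consistency[OF spread_ge mean_dist] by blast
qed

end
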